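(* Let $g\geq 1$ and $n\geq 1$ be integers. Let the Heisenberg group $H_g$ act on the polynomial ring $\mathbf{C}[\ldots,X_\sigma,\ldots]$ in the $2^g$ variables $X_\sigma$, $\sigma\in\mathbf{F}_2^g$, as described in the context. Then the dimension of the space of $H_g$-invariant homogeneous polynomials of degree $4n$ is $$\dim\big(\mathbf{C}[\ldots,X_\sigma,\ldots]_{4n}\big)^{H_g}=2^{-2g}\left(\binom{2^g+4n-1}{4n}+(2^{2g}-1)\binom{2^{g-1}+2n-1}{2n}\right).$$
   Context: $\mu_4=\{z\in\mathbf{C}: z^4=1\}$. The Heisenberg group is $H_g=\mu_4\times\mathbf{F}_2^g\times\mathbf{F}_2^g$ with multiplication $(s,x,u)(t,y,v)=(st(-1)^{u\cdot y},x+y,u+v)$, where $u\cdot y=\sum_i u_iy_i$. It acts on the variables $X_\sigma$ ($\sigma\in\mathbf{F}_2^g$) by $(s,x,u)X_\sigma=s(-1)^{(x+\sigma)\cdot u}X_{x+\sigma}$, and this action is extended to polynomials as ring automorphisms. $\mathbf{C}[\ldots,X_\sigma,\ldots]_{d}$ denotes the space of homogeneous polynomials of degree $d$. *)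

theory Defs
  imports "HOL-Analysis.Analysis" "HOL-Library.Function_Algebras"
begin

definition F2vec :: "nat \<Rightarrow> bool list set" where
  "F2vec g = {xs. length xs = g}"

definition vadd :: "bool list \<Rightarrow> bool list \<Rightarrow> bool list" where
  "vadd x y = map2 (\<lambda>a b. a \<noteq> b) x y"

text \<open>Integer-valued dot product; only its parity matters, via (-1)^dot.\<close>
definition vdot :: "bool list \<Rightarrow> bool list \<Rightarrow> nat" where
  "vdot u y = length (filter id (map2 (\<and>) u y))"

definition mu4 :: "complex set" where
  "mu4 = {z. z ^ 4 = 1}"

definition Heis :: "nat \<Rightarrow> (complex \<times> bool list \<times> bool list) set" where
  "Heis g = {(s, x, u). s \<in> mu4 \<and> x \<in> F2vec g \<and> u \<in> F2vec g}"

definition heis_mult ::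
  "complex \<times> bool list \<times> bool list \<Rightarrow> complex \<times> bool list \<times> bool list \<Rightarrow> complex \<times> bool list \<times> bool list" where
  "heis_mult a b = (case a of (s, x, u) \<Rightarrow> case b of (t, y, v) \<Rightarrow>
      (s * t * (-1) ^ vdot u y, vadd x y, vadd u v))"

text \<open>Monomials in the variables X_sigma (sigma in F_2^g) are exponent functions
  supported on F_2^g; those of total degree d.\<close>
definition Mon :: "nat \<Rightarrow> nat \<Rightarrow> (bool list \<Rightarrow> nat) set" where
  "Mon g d = {e. (\<forall>\<sigma>. \<sigma> \<notin> F2vec g \<longrightarrow> e \<sigma> = 0) \<and> (\<Sum>\<sigma>\<in>F2vec g. e \<sigma>) = d}"

definition HPoly :: "nat \<Rightarrow> nat \<Rightarrow> ((bool list \<Rightarrow> nat) \<Rightarrow> complex) set" where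
  "HPoly g d = {p. \<forall>e. e \<notin> Mon g d \<longrightarrow> p e = 0}"

definition var_coeff :: "complex \<times> bool list \<times> bool list \<Rightarrow> bool list \<Rightarrow> complex" where
  "var_coeff h \<sigma> = (case h of (s, x, u) \<Rightarrow> s * (-1) ^ vdot (vadd x \<sigma>) u)"

definition var_img :: "complex \<times> bool list \<times> bool list \<Rightarrow> bool list \<Rightarrow> bool list" where
  "var_img h \<sigma> = (case h of (s, x, u) \<Rightarrow> vadd x \<sigma>)"

text \<open>Extension to monomials as a ring automorphism:
  h (prod X_sigma^(e sigma)) = prod (c_sigma X_(img sigma))^(e sigma)
  = (prod c_sigma^(e sigma)) * X^(e'), returned as (coefficient, exponent e').\<close>
definition mono_act :: "nat \<Rightarrow> complex \<times> bool list \<times> bool list \<Rightarrow> (bool list \<Rightarrow> nat)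
    \<Rightarrow> complex \<times> (bool list \<Rightarrow> nat)" where
  "mono_act g h e =
     ((\<Prod>\<sigma>\<in>F2vec g. var_coeff h \<sigma> ^ e \<sigma>),
      (\<lambda>\<tau>. \<Sum>\<sigma>\<in>{\<sigma>\<in>F2vec g. var_img h \<sigma> = \<tau>}. e \<sigma>))"

definition poly_act :: "nat \<Rightarrow> nat \<Rightarrow> complex \<times> bool list \<times> bool list
    \<Rightarrow> ((bool list \<Rightarrow> nat) \<Rightarrow> complex) \<Rightarrow> ((bool list \<Rightarrow> nat) \<Rightarrow> complex)" where
  "poly_act g d h p = (\<lambda>f. \<Sum>e\<in>Mon g d.
       if snd (mono_act g h e) = f then fst (mono_act g h e) * p e else 0)"

definition Invariants :: "nat \<Rightarrow> nat \<Rightarrow> ((bool list \<Rightarrow> nat) \<Rightarrow> complex) set" where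
  "Invariants g d = {p \<in> HPoly g d. \<forall>h\<in>Heis g. poly_act g d h p = p}"

definition fscale :: "complex \<Rightarrow> ('a \<Rightarrow> complex) \<Rightarrow> ('a \<Rightarrow> complex)" where
  "fscale c f = (\<lambda>m. c * f m)"

lemma fscale_vector_space: "Vector_Spaces.vector_space (fscale :: complex \<Rightarrow> ('a \<Rightarrow> complex) \<Rightarrow> _)"
  by unfold_locales (auto simp: fscale_def fun_eq_iff algebra_simps)

definition cdim :: "('a \<Rightarrow> complex) set \<Rightarrow> nat" where
  "cdim V = vector_space.dim (fscale :: complex \<Rightarrow> ('a \<Rightarrow> complex) \<Rightarrow> _) V"

end

theory Submission
  imports Defs "HOL-Computational_Algebra.Formal_Power_Series"
begin

text \<open>
  In degree \<open>d = 4n\<close> the scalars \<open>s \<in> \<mu>\<^sub>4\<close> act trivially, an element \<open>(1,0,u)\<close> multiplies a monomial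
  \<open>X\<^sup>f\<close> by a sign, and \<open>(1,x,0)\<close> translates its exponent. So a polynomial is invariant iff its
  coefficients vanish off the monomials of sign 1 for all \<open>u\<close> and are constant on translation
  orbits, and the dimension is the number \<open>N\<close> of these orbits. Burnside's lemma together with
  orthogonality of the characters \<open>u\<close> of \<open>F\<^sub>2\<^sup>g\<close> gives \<open>2\<^sup>2\<^sup>g N = \<Sum>\<^sub>x\<^sub>,\<^sub>u T(x,u)\<close>, where \<open>T(x,u)\<close>
  sums the signs for \<open>u\<close> of the monomials fixed by \<open>x\<close>. \<open>T(0,0)\<close> counts all monomials of degree
  \<open>4n\<close>, and every other \<open>T(x,u)\<close> equals \<open>binom(2\<^sup>g\<^sup>-\<^sup>1 + 2n - 1, 2n)\<close>: for \<open>x = 0\<close> by a generating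
  function, for \<open>x \<noteq> 0\<close> because a monomial fixed by \<open>x\<close> is determined by its part on a half of
  \<open>F\<^sub>2\<^sup>g\<close>, and all these monomials have sign 1.
\<close>

unbundle no vec_syntax
notation fps_nth (infixl "$" 75)

section \<open>Monomials on a finite set and geometric series\<close>

definition monomials_on :: "'a set \<Rightarrow> nat \<Rightarrow> ('a \<Rightarrow> nat) set" where
  "monomials_on V k = {f. (\<forall>v. v \<notin> V \<longrightarrow> f v = 0) \<and> sum f V = k}"

lemma finite_monomials_on:
  assumes "finite V"
  shows "finite (monomials_on V k)"
proof (rule finite_subset)
  show "monomials_on V k \<subseteq> {f. \<forall>v. (v \<in> V \<longrightarrow> f v \<in> {..k}) \<and> (v \<notin> V \<longrightarrow> f v = 0)}"
    using assms by (auto simp: monomials_on_def intro: member_le_sum)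
  show "finite {f. \<forall>v. (v \<in> V \<longrightarrow> f v \<in> {..k}) \<and> (v \<notin> V \<longrightarrow> f v = 0)}"
    using assms by (intro finite_set_of_finite_funs) auto
qed

lemma monomials_on_insert_fiber:
  assumes "finite V" "a \<notin> V" "j \<le> k"
  shows "{f \<in> monomials_on (insert a V) k. f a = j} = (\<lambda>h. h(a := j)) ` monomials_on V (k - j)"
proof (intro equalityI subsetI)
  fix f assume f: "f \<in> {f \<in> monomials_on (insert a V) k. f a = j}"
  have "sum (f(a := 0)) V = sum f V"
    using assms by (intro sum.cong) auto
  then have "f(a := 0) \<in> monomials_on V (k - j)"
    using f assms by (auto simp: monomials_on_def)
  moreover have "f = (f(a := 0))(a := j)"
    using f by auto
  ultimately show "f \<in> (\<lambda>h. h(a := j)) ` monomials_on V (k - j)"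
    by blast
next
  fix f assume "f \<in> (\<lambda>h. h(a := j)) ` monomials_on V (k - j)"
  then obtain h where h: "h \<in> monomials_on V (k - j)" and f: "f = h(a := j)"
    by blast
  have "sum f V = sum h V"
    using assms f by (intro sum.cong) auto
  then show "f \<in> {f \<in> monomials_on (insert a V) k. f a = j}"
    using h f assms by (auto simp: monomials_on_def)
qed

lemma sum_monomials_on_insert:
  assumes "finite V" "a \<notin> V"
  shows "(\<Sum>f\<in>monomials_on (insert a V) k. \<phi> f) = (\<Sum>j\<le>k. \<Sum>h\<in>monomials_on V (k - j). \<phi> (h(a := j)))"
proof -
  have "(\<lambda>f. f a) ` monomials_on (insert a V) k \<subseteq> {..k}"
    using assms by (auto simp: monomials_on_def intro: member_le_sum)
  from sum.group[OF finite_monomials_on _ this, of \<phi>]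
  have "(\<Sum>f\<in>monomials_on (insert a V) k. \<phi> f)
      = (\<Sum>j\<le>k. \<Sum>f\<in>{f \<in> monomials_on (insert a V) k. f a = j}. \<phi> f)"
    using assms by simp
  also have "\<dots> = (\<Sum>j\<le>k. \<Sum>h\<in>monomials_on V (k - j). \<phi> (h(a := j)))"
  proof (rule sum.cong[OF refl])
    fix j assume "j \<in> {..k}"
    moreover have "inj_on (\<lambda>h. h(a := j)) (monomials_on V (k - j))"
      using assms by (intro inj_onI) (auto simp: monomials_on_def fun_eq_iff, metis)
    ultimately show "(\<Sum>f\<in>{f \<in> monomials_on (insert a V) k. f a = j}. \<phi> f)
        = (\<Sum>h\<in>monomials_on V (k - j). \<phi> (h(a := j)))"
      using assms by (simp add: monomials_on_insert_fiber sum.reindex)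
  qed
  finally show ?thesis .
qed

definition geom_fps :: "'a::comm_ring_1 \<Rightarrow> 'a fps" where
  "geom_fps a = Abs_fps (\<lambda>n. a ^ n)"

lemma sum_monomials_on_prod_power:
  fixes w :: "'a \<Rightarrow> 'b::comm_ring_1"
  assumes "finite V"
  shows "(\<Sum>f\<in>monomials_on V k. \<Prod>v\<in>V. w v ^ f v) = (\<Prod>v\<in>V. geom_fps (w v)) $ k"
  using assms
proof (induction V arbitrary: k rule: finite_induct)
  case empty
  have empty_monomials: "monomials_on {} k = (if k = 0 then {\<lambda>_. 0} else {})"
    by (auto simp: monomials_on_def)
  show ?case
    unfolding empty_monomials by simp
next
  case (insert a V)
  have split: "(\<Prod>v\<in>insert a V. w v ^ (h(a := j)) v) = w a ^ j * (\<Prod>v\<in>V. w v ^ h v)" for h j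
  proof -
    have "(\<Prod>v\<in>V. w v ^ (h(a := j)) v) = (\<Prod>v\<in>V. w v ^ h v)"
      using insert by (intro prod.cong) auto
    then show ?thesis
      using insert by simp
  qed
  have "(\<Sum>f\<in>monomials_on (insert a V) k. \<Prod>v\<in>insert a V. w v ^ f v)
      = (\<Sum>j\<le>k. \<Sum>h\<in>monomials_on V (k - j). \<Prod>v\<in>insert a V. w v ^ (h(a := j)) v)"
    by (rule sum_monomials_on_insert[OF insert.hyps])
  also have "\<dots> = (\<Sum>j\<le>k. w a ^ j * (\<Sum>h\<in>monomials_on V (k - j). \<Prod>v\<in>V. w v ^ h v))"
    by (simp only: split sum_distrib_left)
  also have "\<dots> = (\<Sum>j\<le>k. geom_fps (w a) $ j * (\<Prod>v\<in>V. geom_fps (w v)) $ (k - j))"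
    using insert by (simp add: geom_fps_def)
  also have "\<dots> = (\<Prod>v\<in>insert a V. geom_fps (w v)) $ k"
    using insert by (simp add: fps_mult_nth atLeast0AtMost)
  finally show ?case .
qed

lemma geom_fps_one_power_Suc_nth:
  "(geom_fps (1::'a::comm_ring_1) ^ Suc m) $ k = of_nat ((m + k) choose k)"
proof (induction m arbitrary: k)
  case 0
  then show ?case
    by (simp add: geom_fps_def)
next
  case (Suc m)
  have "(geom_fps (1::'a) ^ Suc (Suc m)) $ k = (\<Sum>i=0..k. geom_fps 1 $ i * (geom_fps 1 ^ Suc m) $ (k - i))"
    by (simp add: fps_mult_nth)
  also have "\<dots> = (\<Sum>i\<le>k. of_nat ((m + (k - i)) choose (k - i)))"
    using Suc by (simp add: geom_fps_def atLeast0AtMost)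
  also have "\<dots> = (\<Sum>i\<le>k. of_nat ((m + i) choose i))"
    by (rule sum.reindex_bij_witness[of _ "\<lambda>i. k - i" "\<lambda>i. k - i"]) auto
  also have "\<dots> = of_nat (Suc m + k choose k)"
    by (simp add: sum_choose_lower flip: of_nat_sum)
  finally show ?case .
qed

lemma geom_fps_one_power_nth:
  "(geom_fps (1::'a::comm_ring_1) ^ m) $ k = of_nat ((m + k - 1) choose k)"
  using geom_fps_one_power_Suc_nth[of "m - 1" k]
  by (cases m) (simp_all add: binomial_eq_0)

lemma card_monomials_on:
  assumes "finite V"
  shows "card (monomials_on V k) = (card V + k - 1) choose k"
proof -
  have "of_nat (card (monomials_on V k)) = (\<Sum>f\<in>monomials_on V k. \<Prod>v\<in>V. (1::int) ^ f v)"
    by simp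
  also have "\<dots> = (geom_fps 1 ^ card V) $ k"
    using sum_monomials_on_prod_power[OF assms, of "\<lambda>_. 1" k] by simp
  also have "\<dots> = of_nat ((card V + k - 1) choose k)"
    by (rule geom_fps_one_power_nth)
  finally show ?thesis
    by simp
qed

lemma fps_compose_X_squared_nth:
  fixes f :: "'a::comm_ring_1 fps"
  shows "(f oo fps_X ^ 2) $ n = (if even n then f $ (n div 2) else 0)"
proof -
  have "(f oo fps_X ^ 2) $ n = (\<Sum>i\<in>{0..n}. if i = n div 2 \<and> even n then f $ i else 0)"
    unfolding fps_compose_nth power_mult[symmetric]
    by (intro sum.cong) (auto simp: mult.commute)
  then show ?thesis
    by (cases "even n") (simp_all add: sum.delta)
qed

lemma sum_minus_one_power: "(\<Sum>i=0..n. (-1::'a::comm_ring_1) ^ i) = (if even n then 1 else 0)"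
  by (induction n) auto

lemma geom_fps_one_times_minus_one: "geom_fps (1::'a::comm_ring_1) * geom_fps (-1) = geom_fps 1 oo fps_X ^ 2"
proof (rule fps_ext)
  fix n
  have "(geom_fps (1::'a) * geom_fps (-1)) $ n = (\<Sum>i=0..n. (-1) ^ (n - i))"
    by (simp add: fps_mult_nth geom_fps_def)
  also have "\<dots> = (\<Sum>i=0..n. (-1) ^ i)"
    by (rule sum.reindex_bij_witness[of _ "\<lambda>i. n - i" "\<lambda>i. n - i"]) auto
  finally show "(geom_fps (1::'a) * geom_fps (-1)) $ n = (geom_fps 1 oo fps_X ^ 2) $ n"
    by (simp add: sum_minus_one_power fps_compose_X_squared_nth geom_fps_def)
qed

lemma geom_fps_one_times_minus_one_power_nth:
  "((geom_fps (1::'a::idom) * geom_fps (-1)) ^ m) $ (2 * k) = of_nat ((m + k - 1) choose k)"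
proof -
  have "(geom_fps (1::'a) * geom_fps (-1)) ^ m = geom_fps 1 ^ m oo fps_X ^ 2"
    unfolding geom_fps_one_times_minus_one by (rule fps_compose_power) simp
  then show ?thesis
    by (simp add: fps_compose_X_squared_nth geom_fps_one_power_nth)
qed

section \<open>The vector space \<open>F\<^sub>2\<^sup>g\<close>\<close>

abbreviation zero_vec :: "nat \<Rightarrow> bool list" where
  "zero_vec g \<equiv> replicate g False"

lemma finite_F2vec: "finite (F2vec g)"
  using finite_lists_length_eq[of "UNIV :: bool set" g] by (simp add: F2vec_def)

lemma card_F2vec: "card (F2vec g) = 2 ^ g"
  using card_lists_length_eq[of "UNIV :: bool set" g] by (simp add: F2vec_def)

lemma zero_vec_in_F2vec [simp]: "zero_vec g \<in> F2vec g"
  by (simp add: F2vec_def)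

lemma length_vadd [simp]: "length (vadd x y) = min (length x) (length y)"
  by (simp add: vadd_def)

lemma vadd_in_F2vec: "x \<in> F2vec g \<Longrightarrow> y \<in> F2vec g \<Longrightarrow> vadd x y \<in> F2vec g"
  by (simp add: F2vec_def)

lemma vadd_Cons [simp]: "vadd (a # x) (b # y) = (a \<noteq> b) # vadd x y"
  by (simp add: vadd_def)

lemma vadd_Nil [simp]: "vadd [] y = []" "vadd x [] = []"
  by (simp_all add: vadd_def)

lemma vadd_commute: "vadd x y = vadd y x"
proof (induction x arbitrary: y)
  case (Cons a x)
  then show ?case
    by (cases y) auto
qed simp

lemma vadd_assoc: "vadd x (vadd y z) = vadd (vadd x y) z"
proof (induction x arbitrary: y z)
  case (Cons a x)
  then show ?case
    by (cases y; cases z) auto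
qed simp

lemma vadd_zero_vec_left: "vadd (zero_vec (length x)) x = x"
  by (induction x) auto

lemma vadd_self: "vadd x x = zero_vec (length x)"
  by (induction x) auto

lemma vadd_vadd_cancel: "length x = length y \<Longrightarrow> vadd x (vadd x y) = y"
  by (metis vadd_assoc vadd_self vadd_zero_vec_left)

lemma vadd_vadd_cancel_F2vec: "x \<in> F2vec g \<Longrightarrow> y \<in> F2vec g \<Longrightarrow> vadd x (vadd x y) = y"
  by (simp add: F2vec_def vadd_vadd_cancel)

lemma bij_betw_vadd: "x \<in> F2vec g \<Longrightarrow> bij_betw (vadd x) (F2vec g) (F2vec g)"
  by (rule bij_betw_byWitness[where f' = "vadd x"]) (auto simp: vadd_in_F2vec vadd_vadd_cancel_F2vec)

lemma sum_vadd: "x \<in> F2vec g \<Longrightarrow> (\<Sum>t\<in>F2vec g. \<phi> (vadd x t)) = (\<Sum>t\<in>F2vec g. \<phi> t)"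
  using sum.reindex_bij_betw[OF bij_betw_vadd] by blast

lemma prod_vadd: "x \<in> F2vec g \<Longrightarrow> (\<Prod>t\<in>F2vec g. \<phi> (vadd x t)) = (\<Prod>t\<in>F2vec g. \<phi> t)"
  using prod.reindex_bij_betw[OF bij_betw_vadd] by blast

lemma vdot_Cons [simp]: "vdot (a # x) (b # y) = (if a \<and> b then 1 else 0) + vdot x y"
  by (simp add: vdot_def)

lemma vdot_Nil [simp]: "vdot [] y = 0" "vdot x [] = 0"
  by (simp_all add: vdot_def)

lemma vdot_commute: "vdot x y = vdot y x"
proof (induction x arbitrary: y)
  case (Cons a x)
  then show ?case
    by (cases y) auto
qed simp

lemma vdot_zero_vec_left [simp]: "vdot (zero_vec n) u = 0"
proof (induction n arbitrary: u)
  case (Suc n)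
  then show ?case
    by (cases u) auto
qed simp

lemma vdot_zero_vec_right [simp]: "vdot u (zero_vec n) = 0"
  by (subst vdot_commute) simp

lemma even_vdot_vadd_left:
  assumes "length a = length b" "length b = length u"
  shows "even (vdot (vadd a b) u) \<longleftrightarrow> (even (vdot a u) \<longleftrightarrow> even (vdot b u))"
  using assms by (induction a b u rule: list_induct3) auto

lemma minus_one_power_vdot_vadd_left:
  assumes "a \<in> F2vec g" "b \<in> F2vec g" "u \<in> F2vec g"
  shows "(-1::'a::ring_1) ^ vdot (vadd a b) u = (-1) ^ vdot a u * (-1) ^ vdot b u"
  using even_vdot_vadd_left[of a b u] assms
  by (cases "even (vdot a u)"; cases "even (vdot b u)") (simp_all add: F2vec_def minus_one_power_iff)

lemma exists_odd_vdot:
  assumes "x \<in> F2vec g" "x \<noteq> zero_vec g"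
  obtains u where "u \<in> F2vec g" "odd (vdot x u)"
proof -
  have "\<exists>u. length u = length x \<and> odd (vdot x u)" if "x \<noteq> zero_vec (length x)" for x
    using that
  proof (induction x)
    case (Cons a x)
    show ?case
    proof (cases "x = zero_vec (length x)")
      case True
      with Cons.prems have a
        by (cases a) auto
      then show ?thesis
        by (intro exI[of _ "True # zero_vec (length x)"]) simp
    next
      case False
      then obtain u where "length u = length x" "odd (vdot x u)"
        using Cons.IH by blast
      then show ?thesis
        by (intro exI[of _ "False # u"]) auto
    qed
  qed simp
  then show ?thesis
    using assms that by (auto simp: F2vec_def)
qed

lemma card_even_vdot:
  assumes "u \<in> F2vec g" "y \<in> F2vec g" "odd (vdot y u)"
  shows "card {t \<in> F2vec g. even (vdot t u)} = 2 ^ (g - 1)"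
    and "card {t \<in> F2vec g. odd (vdot t u)} = 2 ^ (g - 1)"
proof -
  let ?E = "{t \<in> F2vec g. even (vdot t u)}" and ?O = "{t \<in> F2vec g. odd (vdot t u)}"
  have "bij_betw (vadd y) ?E ?O"
    by (rule bij_betw_byWitness[where f' = "vadd y"])
      (use assms in \<open>auto simp: F2vec_def vadd_vadd_cancel even_vdot_vadd_left\<close>)
  then have same: "card ?E = card ?O"
    by (rule bij_betw_same_card)
  have "card ?E + card ?O = card (F2vec g)"
    by (subst card_Un_disjoint[symmetric]) (auto simp: finite_F2vec intro: arg_cong[where f = card])
  moreover have "g \<noteq> 0"
    using assms(2,3) by (auto simp: F2vec_def)
  then have "(2::nat) ^ g = 2 * 2 ^ (g - 1)"
    by (cases g) auto
  ultimately show "card ?E = 2 ^ (g - 1)" "card ?O = 2 ^ (g - 1)"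
    using same by (auto simp: card_F2vec)
qed

section \<open>Translations and signs of monomials\<close>

definition transl :: "nat \<Rightarrow> bool list \<Rightarrow> (bool list \<Rightarrow> nat) \<Rightarrow> bool list \<Rightarrow> nat" where
  "transl g x f = (\<lambda>t. if t \<in> F2vec g then f (vadd x t) else 0)"

definition mono_sign :: "nat \<Rightarrow> (bool list \<Rightarrow> nat) \<Rightarrow> bool list \<Rightarrow> int" where
  "mono_sign g f u = (\<Prod>t\<in>F2vec g. ((-1) ^ vdot t u) ^ f t)"

lemma sum_transl: "x \<in> F2vec g \<Longrightarrow> sum (transl g x f) (F2vec g) = sum f (F2vec g)"
  using sum_vadd[of x g f] by (simp add: transl_def)

lemma transl_in_monomials_on:
  "x \<in> F2vec g \<Longrightarrow> f \<in> monomials_on (F2vec g) d \<Longrightarrow> transl g x f \<in> monomials_on (F2vec g) d"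
  by (auto simp: monomials_on_def sum_transl) (simp add: transl_def)

lemma transl_transl:
  "x \<in> F2vec g \<Longrightarrow> y \<in> F2vec g \<Longrightarrow> transl g x (transl g y f) = transl g (vadd y x) f"
  by (auto simp: transl_def fun_eq_iff vadd_in_F2vec vadd_assoc)

lemma transl_zero_vec: "f \<in> monomials_on (F2vec g) d \<Longrightarrow> transl g (zero_vec g) f = f"
  by (auto simp: transl_def fun_eq_iff F2vec_def monomials_on_def vadd_zero_vec_left)

lemma transl_transl_self:
  "x \<in> F2vec g \<Longrightarrow> f \<in> monomials_on (F2vec g) d \<Longrightarrow> transl g x (transl g x f) = f"
  by (simp add: transl_transl vadd_self transl_zero_vec F2vec_def)

lemma mono_sign_cases: "mono_sign g f u = 1 \<or> mono_sign g f u = -1"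
proof -
  have "(\<Prod>t\<in>S. ((-1::int) ^ vdot t u) ^ f t) \<in> {1, -1}" if "finite S" for S
    using that by (induction S rule: finite_induct) (auto simp: minus_one_power_iff)
  then show ?thesis
    using finite_F2vec by (auto simp: mono_sign_def)
qed

lemma mono_sign_mult_self: "mono_sign g f u * mono_sign g f u = 1"
  using mono_sign_cases[of g f u] by auto

lemma mono_sign_zero_vec: "mono_sign g f (zero_vec n) = 1"
  by (simp add: mono_sign_def)

lemma mono_sign_add: "mono_sign g (\<lambda>t. a t + b t) u = mono_sign g a u * mono_sign g b u"
  by (simp add: mono_sign_def power_add prod.distrib)

lemma mono_sign_vadd:
  assumes "u \<in> F2vec g" "v \<in> F2vec g"
  shows "mono_sign g f (vadd u v) = mono_sign g f u * mono_sign g f v"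
proof -
  have "(-1::int) ^ vdot t (vadd u v) = (-1) ^ vdot t u * (-1) ^ vdot t v" if "t \<in> F2vec g" for t
    using minus_one_power_vdot_vadd_left[OF assms that] by (simp add: vdot_commute)
  then show ?thesis
    by (simp add: mono_sign_def power_mult_distrib prod.distrib)
qed

lemma mono_sign_transl:
  assumes x: "x \<in> F2vec g" and u: "u \<in> F2vec g" and f: "f \<in> monomials_on (F2vec g) d"
  shows "mono_sign g (transl g x f) u = ((-1) ^ vdot x u) ^ d * mono_sign g f u"
proof -
  have "mono_sign g (transl g x f) u = (\<Prod>t\<in>F2vec g. ((-1::int) ^ vdot t u) ^ f (vadd x t))"
    by (simp add: mono_sign_def transl_def)
  also have "\<dots> = (\<Prod>t\<in>F2vec g. ((-1::int) ^ vdot (vadd x t) u) ^ f t)"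
    using prod_vadd[OF x, of "\<lambda>t. ((-1::int) ^ vdot (vadd x t) u) ^ f t"] x
    by (simp add: vadd_vadd_cancel_F2vec cong: prod.cong)
  also have "\<dots> = (\<Prod>t\<in>F2vec g. ((-1::int) ^ vdot x u) ^ f t * ((-1) ^ vdot t u) ^ f t)"
    using x u by (intro prod.cong) (auto simp: minus_one_power_vdot_vadd_left power_mult_distrib)
  also have "\<dots> = ((-1) ^ vdot x u) ^ sum f (F2vec g) * mono_sign g f u"
    by (simp add: prod.distrib mono_sign_def power_sum)
  finally show ?thesis
    using f by (simp add: monomials_on_def)
qed

section \<open>Invariants as coefficient functions constant on orbits\<close>

lemma Mon_eq_monomials_on: "Mon g d = monomials_on (F2vec g) d"
  by (simp add: Mon_def monomials_on_def)

lemma snd_mono_act: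
  assumes "x \<in> F2vec g"
  shows "snd (mono_act g (s, x, u) e) = transl g x e"
proof -
  have "{\<sigma> \<in> F2vec g. vadd x \<sigma> = t} = (if t \<in> F2vec g then {vadd x t} else {})" for t
    using assms by (auto simp: vadd_in_F2vec vadd_vadd_cancel_F2vec)
  then show ?thesis
    by (simp add: mono_act_def var_img_def transl_def fun_eq_iff)
qed

lemma fst_mono_act:
  assumes x: "x \<in> F2vec g" and e: "e \<in> monomials_on (F2vec g) d"
  shows "fst (mono_act g (s, x, u) e) = s ^ d * of_int (mono_sign g (transl g x e) u)"
proof -
  have "fst (mono_act g (s, x, u) e)
      = (\<Prod>t\<in>F2vec g. s ^ e t) * (\<Prod>t\<in>F2vec g. ((-1) ^ vdot (vadd x t) u) ^ e t)"
    by (simp add: mono_act_def var_coeff_def power_mult_distrib prod.distrib)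
  also have "(\<Prod>t\<in>F2vec g. s ^ e t) = s ^ d"
    using e by (simp add: power_sum[symmetric] monomials_on_def)
  also have "(\<Prod>t\<in>F2vec g. ((-1::complex) ^ vdot (vadd x t) u) ^ e t)
      = (\<Prod>t\<in>F2vec g. ((-1) ^ vdot t u) ^ e (vadd x t))"
    using prod_vadd[OF x, of "\<lambda>t. ((-1::complex) ^ vdot t u) ^ e (vadd x t)"] x
    by (simp add: vadd_vadd_cancel_F2vec cong: prod.cong)
  also have "\<dots> = of_int (mono_sign g (transl g x e) u)"
    by (simp add: mono_sign_def transl_def)
  finally show ?thesis .
qed

lemma poly_act_eq:
  assumes x: "x \<in> F2vec g" and p: "p \<in> HPoly g d"
  shows "poly_act g d (s, x, u) p f =
    (if f \<in> monomials_on (F2vec g) d then s ^ d * of_int (mono_sign g f u) * p (transl g x f) else 0)"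
proof (cases "f \<in> monomials_on (F2vec g) d")
  case True
  have "poly_act g d (s, x, u) p f = (\<Sum>e\<in>monomials_on (F2vec g) d.
      if e = transl g x f then s ^ d * of_int (mono_sign g (transl g x e) u) * p e else 0)"
    unfolding poly_act_def Mon_eq_monomials_on
  proof (rule sum.cong[OF refl])
    fix e assume e: "e \<in> monomials_on (F2vec g) d"
    have "transl g x e = f \<longleftrightarrow> e = transl g x f"
      using transl_transl_self[OF x] e True by auto
    then show "(if snd (mono_act g (s, x, u) e) = f then fst (mono_act g (s, x, u) e) * p e else 0)
        = (if e = transl g x f then s ^ d * of_int (mono_sign g (transl g x e) u) * p e else 0)"
      unfolding snd_mono_act[OF x] fst_mono_act[OF x e] by presburger
  qed
  also have "\<dots> = s ^ d * of_int (mono_sign g f u) * p (transl g x f)"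
    using transl_in_monomials_on[OF x True] transl_transl_self[OF x True]
    by (simp add: finite_monomials_on[OF finite_F2vec])
  finally show ?thesis
    using True by simp
next
  case False
  then have "poly_act g d (s, x, u) p f = 0"
    unfolding poly_act_def Mon_eq_monomials_on
    by (intro sum.neutral) (auto simp: snd_mono_act[OF x] dest: transl_in_monomials_on[OF x])
  then show ?thesis
    using False by simp
qed

definition sign_trivial :: "nat \<Rightarrow> nat \<Rightarrow> (bool list \<Rightarrow> nat) set" where
  "sign_trivial g d = {f \<in> monomials_on (F2vec g) d. \<forall>u\<in>F2vec g. mono_sign g f u = 1}"

definition transl_invariant :: "nat \<Rightarrow> nat \<Rightarrow> ((bool list \<Rightarrow> nat) \<Rightarrow> complex) set" where
  "transl_invariant g d = {p. (\<forall>f. f \<notin> sign_trivial g d \<longrightarrow> p f = 0) \<and>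
     (\<forall>x\<in>F2vec g. \<forall>f\<in>monomials_on (F2vec g) d. p (transl g x f) = p f)}"

lemma Heis_invariant_iff:
  assumes "4 dvd d" and p: "p \<in> HPoly g d"
  shows "(\<forall>h\<in>Heis g. poly_act g d h p = p) \<longleftrightarrow>
    (\<forall>x\<in>F2vec g. \<forall>u\<in>F2vec g. \<forall>f\<in>monomials_on (F2vec g) d.
       of_int (mono_sign g f u) * p (transl g x f) = p f)"
proof -
  have "s ^ d = 1" if "s \<in> mu4" for s :: complex
    using that assms(1) by (auto simp: mu4_def power_mult elim!: dvdE)
  moreover have "1 \<in> mu4"
    by (simp add: mu4_def)
  ultimately show ?thesis
    using p by (force simp: Heis_def fun_eq_iff poly_act_eq HPoly_def Mon_eq_monomials_on)
qed

lemma Invariants_eq_transl_invariant: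
  assumes "4 dvd d"
  shows "Invariants g d = transl_invariant g d"
proof (intro equalityI subsetI)
  fix p assume "p \<in> Invariants g d"
  then have p: "p \<in> HPoly g d"
    and inv: "\<And>x u f. \<lbrakk>x \<in> F2vec g; u \<in> F2vec g; f \<in> monomials_on (F2vec g) d\<rbrakk>
      \<Longrightarrow> of_int (mono_sign g f u) * p (transl g x f) = p f"
    by (auto simp: Invariants_def Heis_invariant_iff[OF assms])
  have "p f = 0" if f: "f \<notin> sign_trivial g d" for f
  proof (cases "f \<in> monomials_on (F2vec g) d")
    case True
    then obtain u where "u \<in> F2vec g" "mono_sign g f u = -1"
      using f mono_sign_cases by (auto simp: sign_trivial_def)
    then show ?thesis
      using inv[of "zero_vec g" u f] True by (simp add: transl_zero_vec)
  qed (use p in \<open>auto simp: HPoly_def Mon_eq_monomials_on\<close>)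
  moreover have "p (transl g x f) = p f"
    if "x \<in> F2vec g" "f \<in> monomials_on (F2vec g) d" for x f
    using inv[of x "zero_vec g" f] that by (simp add: mono_sign_zero_vec)
  ultimately show "p \<in> transl_invariant g d"
    by (simp add: transl_invariant_def)
next
  fix p assume p: "p \<in> transl_invariant g d"
  then have "p \<in> HPoly g d"
    by (auto simp: transl_invariant_def HPoly_def Mon_eq_monomials_on sign_trivial_def)
  moreover have "of_int (mono_sign g f u) * p (transl g x f) = p f"
    if "x \<in> F2vec g" "u \<in> F2vec g" "f \<in> monomials_on (F2vec g) d" for x u f
    using p that by (cases "f \<in> sign_trivial g d") (auto simp: transl_invariant_def sign_trivial_def)
  ultimately show "p \<in> Invariants g d"
    by (simp add: Invariants_def Heis_invariant_iff[OF assms])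
qed

definition block_constant :: "'a set set \<Rightarrow> ('a \<Rightarrow> complex) set" where
  "block_constant P = {p. (\<forall>a. a \<notin> \<Union>P \<longrightarrow> p a = 0) \<and> (\<forall>Q\<in>P. \<forall>a\<in>Q. \<forall>b\<in>Q. p a = p b)}"

interpretation fun_vs: vector_space "fscale :: complex \<Rightarrow> ('a \<Rightarrow> complex) \<Rightarrow> 'a \<Rightarrow> complex"
  by (rule fscale_vector_space)

lemma sum_fun_apply: "(\<Sum>i\<in>I. F i) a = (\<Sum>i\<in>I. F i a)"
  by (induction I rule: infinite_finite_induct) auto

lemma indicator_disjoint_eq:
  assumes "disjoint P" "Q \<in> P" "Q' \<in> P" "a \<in> Q'"
  shows "indicator Q a = (if Q = Q' then 1 else 0 :: 'b::zero_neq_one)"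
proof (cases "Q = Q'")
  case False
  then have "disjnt Q Q'"
    using pairwiseD[OF assms(1)] assms(2,3) by blast
  then have "a \<notin> Q"
    using assms(4) by (auto simp: disjnt_iff)
  then show ?thesis
    using False by simp
qed (use assms in simp)

lemma indicator_in_block_constant:
  assumes "disjoint P" "Q \<in> P"
  shows "indicator Q \<in> block_constant P"
proof -
  have "indicator Q a = (indicator Q b :: complex)" if "Q' \<in> P" "a \<in> Q'" "b \<in> Q'" for Q' a b
    using indicator_disjoint_eq[where 'b = complex, OF assms that(1,2)]
      indicator_disjoint_eq[where 'b = complex, OF assms that(1,3)] by simp
  moreover have "indicator Q a = (0 :: complex)" if "a \<notin> \<Union>P" for a
    using assms(2) that by auto
  ultimately show ?thesis
    unfolding block_constant_def by blast
qed

lemma block_constant_eq_sum_indicator: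
  assumes fin: "finite P" and disj: "disjoint P" and p: "p \<in> block_constant P"
  shows "p = (\<Sum>Q\<in>P. fscale (p (SOME a. a \<in> Q)) (indicator Q))"
proof
  fix a
  show "p a = (\<Sum>Q\<in>P. fscale (p (SOME a. a \<in> Q)) (indicator Q)) a"
  proof (cases "a \<in> \<Union>P")
    case True
    then obtain Q' where Q': "Q' \<in> P" "a \<in> Q'"
      by blast
    have "(\<Sum>Q\<in>P. fscale (p (SOME a. a \<in> Q)) (indicator Q)) a
        = (\<Sum>Q\<in>P. if Q = Q' then p (SOME b. b \<in> Q) else 0)"
      unfolding sum_fun_apply fscale_def
      by (rule sum.cong[OF refl]) (simp add: indicator_disjoint_eq[OF disj _ Q'])
    also have "\<dots> = p (SOME b. b \<in> Q')"
      using Q' fin by simp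
    also have "\<dots> = p a"
      using p Q' someI[of "\<lambda>b. b \<in> Q'"] unfolding block_constant_def by blast
    finally show ?thesis
      by (rule sym)
  next
    case False
    then have "p a = 0"
      using p unfolding block_constant_def by blast
    then show ?thesis
      using False by (auto simp: sum_fun_apply fscale_def indicator_def intro!: sum.neutral)
  qed
qed

lemma independent_indicators:
  assumes fin: "finite P" and nonempty: "{} \<notin> P" and disj: "disjoint P"
  shows "fun_vs.independent (indicator ` P :: ('a \<Rightarrow> complex) set)"
proof (rule fun_vs.independent_if_scalars_zero)
  fix c :: "('a \<Rightarrow> complex) \<Rightarrow> complex" and v :: "'a \<Rightarrow> complex"
  assume zero: "(\<Sum>w\<in>indicator ` P. fscale (c w) w) = 0" and v: "v \<in> indicator ` P"
  then obtain Q where Q: "Q \<in> P" "v = indicator Q"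
    by blast
  with nonempty obtain a where a: "a \<in> Q"
    by (metis all_not_in_conv)
  have "0 = (\<Sum>w\<in>indicator ` P. c w * w a)"
    using fun_cong[OF zero, of a] by (simp add: sum_fun_apply fscale_def)
  also have "\<dots> = (\<Sum>w\<in>indicator ` P. if w = v then c w else 0)"
    using Q a by (intro sum.cong) (auto simp: indicator_disjoint_eq[OF disj] split: if_splits)
  also have "\<dots> = c v"
    using fin v by simp
  finally show "c v = 0"
    by (rule sym)
qed (use fin in simp)

lemma cdim_block_constant:
  assumes "finite P" "{} \<notin> P" "disjoint P"
  shows "cdim (block_constant P) = card P"
  unfolding cdim_def
proof (rule fun_vs.dim_unique)
  show "indicator ` P \<subseteq> block_constant P"
    using indicator_in_block_constant[OF assms(3)] by blast
  show "block_constant P \<subseteq> fun_vs.span (indicator ` P)"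
  proof
    fix p assume p: "p \<in> block_constant P"
    show "p \<in> fun_vs.span (indicator ` P)"
      by (subst block_constant_eq_sum_indicator[OF assms(1,3) p])
        (intro fun_vs.span_sum fun_vs.span_scale fun_vs.span_base imageI)
  qed
  show "fun_vs.independent (indicator ` P)"
    by (rule independent_indicators[OF assms])
  show "card (indicator ` P) = card P"
    by (intro card_image inj_onI) (simp add: fun_eq_iff indicator_def set_eq_iff of_bool_eq_iff)
qed

definition transl_orbit :: "nat \<Rightarrow> (bool list \<Rightarrow> nat) \<Rightarrow> (bool list \<Rightarrow> nat) set" where
  "transl_orbit g f = (\<lambda>x. transl g x f) ` F2vec g"

lemma finite_sign_trivial: "finite (sign_trivial g d)"
  using finite_monomials_on[OF finite_F2vec] by (simp add: sign_trivial_def)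

lemma sign_trivial_subset_monomials_on: "sign_trivial g d \<subseteq> monomials_on (F2vec g) d"
  by (auto simp: sign_trivial_def)

lemma transl_in_sign_trivial:
  assumes "even d" "x \<in> F2vec g" "f \<in> sign_trivial g d"
  shows "transl g x f \<in> sign_trivial g d"
proof -
  have "((-1::int) ^ vdot x u) ^ d = 1" for u
    using assms(1) by (simp add: power_mult[symmetric] minus_one_power_iff)
  then show ?thesis
    using assms by (auto simp: sign_trivial_def transl_in_monomials_on mono_sign_transl)
qed

lemma self_in_transl_orbit: "f \<in> monomials_on (F2vec g) d \<Longrightarrow> f \<in> transl_orbit g f"
  unfolding transl_orbit_def by (rule image_eqI[of _ _ "zero_vec g"]) (simp_all add: transl_zero_vec)

lemma transl_orbit_eq:
  assumes f: "f \<in> monomials_on (F2vec g) d" and h: "h \<in> transl_orbit g f"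
  shows "transl_orbit g h = transl_orbit g f"
proof -
  obtain y where y: "y \<in> F2vec g" and h: "h = transl g y f"
    using h by (auto simp: transl_orbit_def)
  have "transl_orbit g h = (\<lambda>x. transl g x f) ` (vadd y ` F2vec g)"
    unfolding transl_orbit_def h image_image using y by (auto simp: transl_transl)
  also have "vadd y ` F2vec g = F2vec g"
    using bij_betw_vadd[OF y] by (simp add: bij_betw_def)
  finally show ?thesis
    by (simp add: transl_orbit_def)
qed

lemma transl_orbit_subset_sign_trivial:
  "even d \<Longrightarrow> f \<in> sign_trivial g d \<Longrightarrow> transl_orbit g f \<subseteq> sign_trivial g d"
  by (auto simp: transl_orbit_def transl_in_sign_trivial)

lemma disjoint_transl_orbits:
  assumes "A \<subseteq> monomials_on (F2vec g) d"
  shows "disjoint (transl_orbit g ` A)"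
proof (rule pairwise_imageI)
  fix f f' assume "f \<in> A" "f' \<in> A" "transl_orbit g f \<noteq> transl_orbit g f'"
  then show "disjnt (transl_orbit g f) (transl_orbit g f')"
    using assms transl_orbit_eq[of f g d] transl_orbit_eq[of f' g d] unfolding disjnt_iff by blast
qed

lemma Union_transl_orbits:
  assumes "even d"
  shows "\<Union>(transl_orbit g ` sign_trivial g d) = sign_trivial g d"
proof
  show "\<Union>(transl_orbit g ` sign_trivial g d) \<subseteq> sign_trivial g d"
    using transl_orbit_subset_sign_trivial[OF assms] by blast
  show "sign_trivial g d \<subseteq> \<Union>(transl_orbit g ` sign_trivial g d)"
  proof
    fix f assume "f \<in> sign_trivial g d"
    moreover from this have "f \<in> transl_orbit g f"
      using self_in_transl_orbit sign_trivial_subset_monomials_on by blast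
    ultimately show "f \<in> \<Union>(transl_orbit g ` sign_trivial g d)"
      by blast
  qed
qed

lemma transl_invariant_eq_block_constant:
  assumes "even d"
  shows "transl_invariant g d = block_constant (transl_orbit g ` sign_trivial g d)"
proof -
  have invariance_iff: "(\<forall>x\<in>F2vec g. \<forall>f\<in>monomials_on (F2vec g) d. p (transl g x f) = p f) \<longleftrightarrow>
      (\<forall>Q\<in>transl_orbit g ` sign_trivial g d. \<forall>a\<in>Q. \<forall>b\<in>Q. p a = p b)"
    if vanish: "\<forall>f. f \<notin> sign_trivial g d \<longrightarrow> p f = 0" for p
  proof (intro iffI ballI)
    fix Q a b
    assume inv: "\<forall>x\<in>F2vec g. \<forall>f\<in>monomials_on (F2vec g) d. p (transl g x f) = p f"
      and "Q \<in> transl_orbit g ` sign_trivial g d" "a \<in> Q" "b \<in> Q"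
    then obtain f x y where "f \<in> sign_trivial g d" "x \<in> F2vec g" "y \<in> F2vec g"
      and "a = transl g x f" "b = transl g y f"
      by (auto simp: transl_orbit_def)
    moreover from this have "f \<in> monomials_on (F2vec g) d"
      using sign_trivial_subset_monomials_on by blast
    ultimately show "p a = p b"
      using inv by simp
  next
    fix x f
    assume const: "\<forall>Q\<in>transl_orbit g ` sign_trivial g d. \<forall>a\<in>Q. \<forall>b\<in>Q. p a = p b"
      and x: "x \<in> F2vec g" and f: "f \<in> monomials_on (F2vec g) d"
    show "p (transl g x f) = p f"
    proof (cases "f \<in> sign_trivial g d")
      case True
      then show ?thesis
        using const x self_in_transl_orbit[OF f] unfolding transl_orbit_def by blast
    next
      case False
      then have "transl g x f \<notin> sign_trivial g d"
        using transl_in_sign_trivial[OF assms x] transl_transl_self[OF x f] by metis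
      then show ?thesis
        using False vanish by simp
    qed
  qed
  show ?thesis
    unfolding transl_invariant_def block_constant_def Union_transl_orbits[OF assms]
    by (intro Collect_cong conj_cong refl) (erule invariance_iff)
qed

lemma cdim_Invariants:
  assumes "4 dvd d"
  shows "cdim (Invariants g d) = card (transl_orbit g ` sign_trivial g d)"
proof -
  have "even d"
    using assms by (auto elim: dvdE)
  moreover have "{} \<notin> transl_orbit g ` sign_trivial g d"
    using self_in_transl_orbit sign_trivial_subset_monomials_on by blast
  ultimately show ?thesis
    using finite_sign_trivial disjoint_transl_orbits[OF sign_trivial_subset_monomials_on]
    by (simp add: Invariants_eq_transl_invariant[OF assms] transl_invariant_eq_block_constant
        cdim_block_constant)
qed

section \<open>Counting orbits\<close>

definition transl_stab :: "nat \<Rightarrow> (bool list \<Rightarrow> nat) \<Rightarrow> bool list set" where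
  "transl_stab g f = {x \<in> F2vec g. transl g x f = f}"

lemma card_transl_fiber:
  assumes f: "f \<in> monomials_on (F2vec g) d" and y: "y \<in> F2vec g"
  shows "card {x \<in> F2vec g. transl g x f = transl g y f} = card (transl_stab g f)"
proof -
  have shift: "transl g x f = transl g y f \<longleftrightarrow> transl g (vadd x y) f = f" if x: "x \<in> F2vec g" for x
    using transl_transl[OF y x, of f] transl_transl_self[OF y, of "transl g x f"]
      transl_transl_self[OF y f] transl_in_monomials_on[OF x f]
    by (metis vadd_commute)
  have "{x \<in> F2vec g. transl g x f = transl g y f} = vadd y ` transl_stab g f"
  proof (intro equalityI subsetI)
    fix x assume "x \<in> {x \<in> F2vec g. transl g x f = transl g y f}"
    then have x: "x \<in> F2vec g" and "vadd x y \<in> transl_stab g f"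
      using shift y by (auto simp: transl_stab_def vadd_in_F2vec)
    moreover have "x = vadd y (vadd x y)"
      using x y by (metis vadd_commute vadd_vadd_cancel_F2vec)
    ultimately show "x \<in> vadd y ` transl_stab g f"
      by blast
  next
    fix x assume "x \<in> vadd y ` transl_stab g f"
    then obtain z where z: "z \<in> F2vec g" "transl g z f = f" and x: "x = vadd y z"
      by (auto simp: transl_stab_def)
    have "vadd x y = z"
      using x y z by (simp add: vadd_commute vadd_vadd_cancel_F2vec)
    then show "x \<in> {x \<in> F2vec g. transl g x f = transl g y f}"
      using shift[of x] x y z by (simp add: vadd_in_F2vec)
  qed
  moreover have "inj_on (vadd y) (transl_stab g f)"
    using bij_betw_vadd[OF y] by (auto simp: bij_betw_def transl_stab_def intro: inj_on_subset)
  ultimately show ?thesis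
    by (simp add: card_image)
qed

lemma card_transl_stab_times_card_transl_orbit:
  assumes f: "f \<in> monomials_on (F2vec g) d"
  shows "card (transl_stab g f) * card (transl_orbit g f) = 2 ^ g"
proof -
  have "2 ^ g = (\<Sum>x\<in>F2vec g. 1::nat)"
    by (simp add: card_F2vec)
  also have "\<dots> = (\<Sum>h\<in>transl_orbit g f. \<Sum>x\<in>{x \<in> F2vec g. transl g x f = h}. 1)"
    by (rule sum.group[symmetric]) (auto simp: finite_F2vec transl_orbit_def)
  also have "\<dots> = (\<Sum>h\<in>transl_orbit g f. card (transl_stab g f))"
  proof (rule sum.cong[OF refl])
    fix h assume "h \<in> transl_orbit g f"
    then obtain y where "y \<in> F2vec g" "h = transl g y f"
      by (auto simp: transl_orbit_def)
    then show "(\<Sum>x\<in>{x \<in> F2vec g. transl g x f = h}. 1) = card (transl_stab g f)"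
      using card_transl_fiber[OF f] by simp
  qed
  finally show ?thesis
    by simp
qed

lemma sum_card_transl_stab_orbit:
  assumes f0: "f0 \<in> monomials_on (F2vec g) d"
  shows "(\<Sum>f\<in>transl_orbit g f0. card (transl_stab g f)) = 2 ^ g"
proof -
  let ?Q = "transl_orbit g f0"
  have stab_orbit: "card (transl_stab g f) * card ?Q = 2 ^ g" if "f \<in> ?Q" for f
  proof -
    have "f \<in> monomials_on (F2vec g) d"
      using that f0 by (auto simp: transl_orbit_def transl_in_monomials_on)
    then show ?thesis
      using card_transl_stab_times_card_transl_orbit transl_orbit_eq[OF f0 that] by metis
  qed
  have "card (transl_stab g f) = 2 ^ g div card ?Q" if "f \<in> ?Q" for f
  proof -
    have "card ?Q \<noteq> 0"
      using stab_orbit[OF that] by (cases "card ?Q = 0") auto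
    then show ?thesis
      using stab_orbit[OF that] by (metis nonzero_mult_div_cancel_right)
  qed
  then have "(\<Sum>f\<in>?Q. card (transl_stab g f)) = card ?Q * (2 ^ g div card ?Q)"
    by simp
  also have "\<dots> = 2 ^ g"
    using stab_orbit[OF self_in_transl_orbit[OF f0]] by (metis dvd_mult_div_cancel dvd_triv_right)
  finally show ?thesis .
qed

lemma card_transl_orbits:
  assumes A: "A \<subseteq> monomials_on (F2vec g) d" "finite A"
    and closed: "\<And>x f. x \<in> F2vec g \<Longrightarrow> f \<in> A \<Longrightarrow> transl g x f \<in> A"
  shows "2 ^ g * card (transl_orbit g ` A) = (\<Sum>x\<in>F2vec g. card {f \<in> A. transl g x f = f})"
proof -
  have block: "{f \<in> A. transl_orbit g f = transl_orbit g f0} = transl_orbit g f0" if f0: "f0 \<in> A" for f0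
  proof (intro equalityI subsetI)
    fix f assume "f \<in> {f \<in> A. transl_orbit g f = transl_orbit g f0}"
    then show "f \<in> transl_orbit g f0"
      using A self_in_transl_orbit by blast
  next
    fix f assume "f \<in> transl_orbit g f0"
    moreover from this have "f \<in> A"
      using closed f0 by (auto simp: transl_orbit_def)
    ultimately show "f \<in> {f \<in> A. transl_orbit g f = transl_orbit g f0}"
      using transl_orbit_eq f0 A by blast
  qed
  have "(\<Sum>x\<in>F2vec g. card {f \<in> A. transl g x f = f})
      = (\<Sum>x\<in>F2vec g. \<Sum>f\<in>A. if transl g x f = f then 1 else 0)"
    by (simp add: sum.inter_filter[OF A(2), symmetric])
  also have "\<dots> = (\<Sum>f\<in>A. \<Sum>x\<in>F2vec g. if transl g x f = f then 1 else 0)"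
    by (rule sum.swap)
  also have "\<dots> = (\<Sum>f\<in>A. card (transl_stab g f))"
    by (simp add: sum.inter_filter[OF finite_F2vec, symmetric] transl_stab_def)
  also have "\<dots> = (\<Sum>Q\<in>transl_orbit g ` A. \<Sum>f\<in>{f \<in> A. transl_orbit g f = Q}. card (transl_stab g f))"
    by (rule sum.group[symmetric]) (use A in auto)
  also have "\<dots> = (\<Sum>Q\<in>transl_orbit g ` A. 2 ^ g)"
    using A by (intro sum.cong) (auto simp: block sum_card_transl_stab_orbit)
  finally show ?thesis
    by simp
qed

lemma sum_mono_sign:
  "(\<Sum>u\<in>F2vec g. mono_sign g f u) = (if \<forall>u\<in>F2vec g. mono_sign g f u = 1 then 2 ^ g else 0)"
proof (cases "\<forall>u\<in>F2vec g. mono_sign g f u = 1")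
  case False
  then obtain u0 where u0: "u0 \<in> F2vec g" "mono_sign g f u0 = -1"
    using mono_sign_cases by blast
  have "(\<Sum>u\<in>F2vec g. mono_sign g f u) = (\<Sum>u\<in>F2vec g. mono_sign g f (vadd u0 u))"
    using sum_vadd[OF u0(1), of "mono_sign g f"] by simp
  also have "\<dots> = - (\<Sum>u\<in>F2vec g. mono_sign g f u)"
    using u0 by (simp add: mono_sign_vadd sum_negf)
  finally show ?thesis
    using False by simp
qed (simp add: card_F2vec)

definition transl_fixed :: "nat \<Rightarrow> nat \<Rightarrow> bool list \<Rightarrow> (bool list \<Rightarrow> nat) set" where
  "transl_fixed g d x = {f \<in> monomials_on (F2vec g) d. transl g x f = f}"

definition fixed_sign_sum :: "nat \<Rightarrow> nat \<Rightarrow> bool list \<Rightarrow> bool list \<Rightarrow> int" where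
  "fixed_sign_sum g d x u = (\<Sum>f\<in>transl_fixed g d x. mono_sign g f u)"

lemma finite_transl_fixed: "finite (transl_fixed g d x)"
  using finite_monomials_on[OF finite_F2vec] by (simp add: transl_fixed_def)

lemma transl_fixed_zero_vec: "transl_fixed g d (zero_vec g) = monomials_on (F2vec g) d"
  by (auto simp: transl_fixed_def transl_zero_vec)

lemma card_sign_trivial_fixed:
  "2 ^ g * int (card {f \<in> sign_trivial g d. transl g x f = f}) = (\<Sum>u\<in>F2vec g. fixed_sign_sum g d x u)"
proof -
  have "(\<Sum>u\<in>F2vec g. fixed_sign_sum g d x u) = (\<Sum>f\<in>transl_fixed g d x. \<Sum>u\<in>F2vec g. mono_sign g f u)"
    unfolding fixed_sign_sum_def by (rule sum.swap)
  also have "\<dots> = (\<Sum>f\<in>transl_fixed g d x. if f \<in> sign_trivial g d then 2 ^ g else 0)"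
    by (intro sum.cong) (auto simp: sum_mono_sign sign_trivial_def transl_fixed_def)
  also have "\<dots> = (\<Sum>f\<in>{f \<in> transl_fixed g d x. f \<in> sign_trivial g d}. 2 ^ g)"
    by (rule sum.inter_filter[OF finite_transl_fixed, symmetric])
  also have "{f \<in> transl_fixed g d x. f \<in> sign_trivial g d} = {f \<in> sign_trivial g d. transl g x f = f}"
    by (auto simp: sign_trivial_def transl_fixed_def)
  finally show ?thesis
    by simp
qed

lemma fixed_sign_sum_zero_vec_zero_vec:
  "fixed_sign_sum g d (zero_vec g) (zero_vec g) = (2 ^ g + d - 1) choose d"
  by (simp add: fixed_sign_sum_def transl_fixed_zero_vec mono_sign_zero_vec card_monomials_on
      finite_F2vec card_F2vec)

text \<open>Over the two halves cut out by \<open>u\<close> the generating function of the signs is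
  \<open>(1 - X)\<^sup>-\<^sup>m (1 + X)\<^sup>-\<^sup>m = (1 - X\<^sup>2)\<^sup>-\<^sup>m\<close> with \<open>m = 2\<^sup>g\<^sup>-\<^sup>1\<close>.\<close>

lemma fixed_sign_sum_zero_vec:
  assumes u: "u \<in> F2vec g" "u \<noteq> zero_vec g"
  shows "fixed_sign_sum g (2 * k) (zero_vec g) u = (2 ^ (g - 1) + k - 1) choose k"
proof -
  let ?E = "{t \<in> F2vec g. even (vdot t u)}" and ?O = "{t \<in> F2vec g. odd (vdot t u)}"
  let ?sgn = "\<lambda>t. (-1::int) ^ vdot t u"
  obtain y where y: "y \<in> F2vec g" "odd (vdot u y)"
    using exists_odd_vdot u by blast
  then have card_halves: "card ?E = 2 ^ (g - 1)" "card ?O = 2 ^ (g - 1)"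
    using card_even_vdot[OF u(1) y(1)] by (simp_all add: vdot_commute)
  have "fixed_sign_sum g (2 * k) (zero_vec g) u = (\<Prod>t\<in>F2vec g. geom_fps (?sgn t)) $ (2 * k)"
    unfolding fixed_sign_sum_def transl_fixed_zero_vec mono_sign_def
    by (rule sum_monomials_on_prod_power[OF finite_F2vec])
  also have "(\<Prod>t\<in>F2vec g. geom_fps (?sgn t)) = (\<Prod>t\<in>?E. geom_fps (?sgn t)) * (\<Prod>t\<in>?O. geom_fps (?sgn t))"
    by (subst prod.union_disjoint[symmetric]) (auto simp: finite_F2vec intro: prod.cong)
  also have "\<dots> = (\<Prod>t\<in>?E. geom_fps 1) * (\<Prod>t\<in>?O. geom_fps (-1))"
    by (intro arg_cong2[where f = "(*)"] prod.cong) auto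
  also have "\<dots> = (geom_fps 1 * geom_fps (-1)) ^ 2 ^ (g - 1)"
    by (simp only: prod_constant card_halves power_mult_distrib)
  also have "\<dots> $ (2 * k) = of_nat ((2 ^ (g - 1) + k - 1) choose k)"
    by (rule geom_fps_one_times_minus_one_power_nth)
  finally show ?thesis .
qed

lemma monomials_on_mono:
  assumes "R \<subseteq> V" "finite V"
  shows "monomials_on R k \<subseteq> monomials_on V k"
proof
  fix c assume c: "c \<in> monomials_on R k"
  have "sum c V = sum c R"
    using assms c by (intro sum.mono_neutral_right) (auto simp: monomials_on_def)
  then show "c \<in> monomials_on V k"
    using assms c by (auto simp: monomials_on_def)
qed

definition symmetrize :: "nat \<Rightarrow> bool list \<Rightarrow> (bool list \<Rightarrow> nat) \<Rightarrow> bool list \<Rightarrow> nat" where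
  "symmetrize g x c = (\<lambda>t. c t + transl g x c t)"

lemma symmetrize_in_transl_fixed:
  assumes x: "x \<in> F2vec g" and c: "c \<in> monomials_on (F2vec g) k"
  shows "symmetrize g x c \<in> transl_fixed g (2 * k) x"
proof -
  have "sum (symmetrize g x c) (F2vec g) = 2 * k"
    using c sum_transl[OF x, of c] by (simp add: symmetrize_def sum.distrib monomials_on_def)
  moreover have "transl g x (symmetrize g x c) = symmetrize g x c"
    using c vadd_vadd_cancel_F2vec[OF x] vadd_in_F2vec[OF x]
    by (auto simp: symmetrize_def fun_eq_iff transl_def monomials_on_def)
  ultimately show ?thesis
    using c by (auto simp: transl_fixed_def monomials_on_def symmetrize_def transl_def)
qed

lemma mono_sign_symmetrize:
  assumes "x \<in> F2vec g" "u \<in> F2vec g" "c \<in> monomials_on (F2vec g) k"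
  shows "mono_sign g (symmetrize g x c) u = ((-1) ^ vdot x u) ^ k"
  using mono_sign_mult_self[of g c u]
  by (simp add: symmetrize_def mono_sign_add mono_sign_transl[OF assms] algebra_simps)

lemma bij_betw_symmetrize:
  assumes x: "x \<in> F2vec g" and R: "R \<subseteq> F2vec g"
    and swap: "\<And>t. t \<in> F2vec g \<Longrightarrow> vadd x t \<in> R \<longleftrightarrow> t \<notin> R"
  shows "bij_betw (symmetrize g x) (monomials_on R k) (transl_fixed g (2 * k) x)"
proof (rule bij_betw_byWitness[where f' = "\<lambda>f t. if t \<in> R then f t else 0"])
  let ?rst = "\<lambda>f t. if t \<in> R then f t else 0"
  show "\<forall>c\<in>monomials_on R k. ?rst (symmetrize g x c) = c"
    using R swap by (auto simp: fun_eq_iff symmetrize_def transl_def monomials_on_def)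
  have symmetrize_rst: "symmetrize g x (?rst f) = f" if f: "f \<in> transl_fixed g (2 * k) x" for f
  proof
    fix t
    have "f t = 0" if "t \<notin> F2vec g"
      using f that by (auto simp: transl_fixed_def monomials_on_def)
    moreover have "f (vadd x t) = f t" if "t \<in> F2vec g"
      using f that by (auto simp: transl_fixed_def transl_def fun_eq_iff dest: spec[of _ t])
    ultimately show "symmetrize g x (?rst f) t = f t"
      using R swap[of t] by (auto simp: symmetrize_def transl_def)
  qed
  then show "\<forall>f\<in>transl_fixed g (2 * k) x. symmetrize g x (?rst f) = f"
    by blast
  show "symmetrize g x ` monomials_on R k \<subseteq> transl_fixed g (2 * k) x"
    using symmetrize_in_transl_fixed[OF x] monomials_on_mono[OF R finite_F2vec] by blast
  show "?rst ` transl_fixed g (2 * k) x \<subseteq> monomials_on R k"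
  proof
    fix c assume "c \<in> ?rst ` transl_fixed g (2 * k) x"
    then obtain f where f: "f \<in> transl_fixed g (2 * k) x" and c: "c = ?rst f"
      by blast
    have "2 * k = sum f (F2vec g)"
      using f by (simp add: transl_fixed_def monomials_on_def)
    also have "f = symmetrize g x c"
      using symmetrize_rst[OF f] unfolding c by (rule sym)
    also have "sum (symmetrize g x c) (F2vec g) = 2 * sum c (F2vec g)"
      using sum_transl[OF x, of c] by (simp add: symmetrize_def sum.distrib)
    also have "sum c (F2vec g) = sum c R"
      using R by (intro sum.mono_neutral_right[OF finite_F2vec]) (auto simp: c)
    finally show "c \<in> monomials_on R k"
      by (simp add: monomials_on_def c)
  qed
qed

lemma fixed_sign_sum_nonzero:
  assumes x: "x \<in> F2vec g" "x \<noteq> zero_vec g" and u: "u \<in> F2vec g"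
  shows "fixed_sign_sum g (4 * k) x u = (2 ^ (g - 1) + 2 * k - 1) choose (2 * k)"
proof -
  obtain y where y: "y \<in> F2vec g" "odd (vdot x y)"
    using exists_odd_vdot x by blast
  define R where "R = {t \<in> F2vec g. even (vdot t y)}"
  have R: "R \<subseteq> F2vec g" "finite R"
    using finite_F2vec by (auto simp: R_def intro: finite_subset)
  have "vadd x t \<in> R \<longleftrightarrow> t \<notin> R" if "t \<in> F2vec g" for t
    using that x y by (auto simp: R_def F2vec_def even_vdot_vadd_left)
  then have bij: "bij_betw (symmetrize g x) (monomials_on R (2 * k)) (transl_fixed g (4 * k) x)"
    using bij_betw_symmetrize[OF x(1) R(1), of "2 * k"] by simp
  have "mono_sign g f u = 1" if f_fixed: "f \<in> transl_fixed g (4 * k) x" for f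
  proof -
    obtain c where "c \<in> monomials_on R (2 * k)" and f: "f = symmetrize g x c"
      using bij f_fixed by (auto simp: bij_betw_def)
    then have "c \<in> monomials_on (F2vec g) (2 * k)"
      using monomials_on_mono[OF R(1) finite_F2vec] by blast
    then show ?thesis
      by (simp add: f mono_sign_symmetrize[OF x(1) u] power_mult[symmetric] mult.commute[of _ 2]
          power_mult)
  qed
  then have "fixed_sign_sum g (4 * k) x u = card (transl_fixed g (4 * k) x)"
    by (simp add: fixed_sign_sum_def)
  also have "\<dots> = card (monomials_on R (2 * k))"
    using bij_betw_same_card[OF bij] by simp
  also have "\<dots> = (2 ^ (g - 1) + 2 * k - 1) choose (2 * k)"
    using card_monomials_on[OF R(2)] card_even_vdot(1)[OF y(1) x(1)] y(2)
    by (simp add: R_def vdot_commute)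
  finally show ?thesis .
qed

lemma sum_fixed_sign_sum:
  "(\<Sum>x\<in>F2vec g. \<Sum>u\<in>F2vec g. fixed_sign_sum g (4 * n) x u)
    = int ((2 ^ g + 4 * n - 1) choose (4 * n))
      + int (2 ^ (2 * g) - 1) * int ((2 ^ (g - 1) + 2 * n - 1) choose (2 * n))"
proof -
  let ?F = "F2vec g" and ?T = "\<lambda>(x, u). fixed_sign_sum g (4 * n) x u"
  let ?C = "(2 ^ (g - 1) + 2 * n - 1) choose (2 * n)"
  have nonzero: "?T p = int ?C" if p_mem: "p \<in> ?F \<times> ?F - {(zero_vec g, zero_vec g)}" for p
  proof -
    obtain x u where p: "p = (x, u)" "x \<in> ?F" "u \<in> ?F" "(x, u) \<noteq> (zero_vec g, zero_vec g)"
      using p_mem by auto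
    show ?thesis
    proof (cases "x = zero_vec g")
      case True
      then show ?thesis
        using p fixed_sign_sum_zero_vec[of u g "2 * n"] by (simp add: mult.assoc)
    next
      case False
      then show ?thesis
        using p fixed_sign_sum_nonzero by simp
    qed
  qed
  have "(\<Sum>x\<in>?F. \<Sum>u\<in>?F. fixed_sign_sum g (4 * n) x u) = (\<Sum>p\<in>?F \<times> ?F. ?T p)"
    by (simp add: sum.cartesian_product)
  also have "\<dots> = ?T (zero_vec g, zero_vec g) + (\<Sum>p\<in>?F \<times> ?F - {(zero_vec g, zero_vec g)}. ?T p)"
    by (rule sum.remove) (simp_all add: finite_F2vec)
  also have "\<dots> = int ((2 ^ g + 4 * n - 1) choose (4 * n)) + int (card (?F \<times> ?F) - 1) * int ?C"
    using nonzero by (simp add: fixed_sign_sum_zero_vec_zero_vec card_Diff_singleton finite_F2vec)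
  also have "card (?F \<times> ?F) = 2 ^ (2 * g)"
    by (simp add: card_cartesian_product card_F2vec power_add[symmetric] mult_2)
  finally show ?thesis .
qed

lemma card_transl_orbits_sign_trivial:
  "2 ^ (2 * g) * card (transl_orbit g ` sign_trivial g (4 * n))
    = ((2 ^ g + 4 * n - 1) choose (4 * n))
      + (2 ^ (2 * g) - 1) * ((2 ^ (g - 1) + 2 * n - 1) choose (2 * n))"
proof -
  let ?N = "card (transl_orbit g ` sign_trivial g (4 * n))"
  have "(2::nat) ^ (2 * g) = 2 ^ g * 2 ^ g"
    by (metis mult_2 power_add)
  then have "int (2 ^ (2 * g) * ?N) = 2 ^ g * int (2 ^ g * ?N)"
    by (simp only: of_nat_mult of_nat_power mult.assoc) simp
  also have "int (2 ^ g * ?N) = (\<Sum>x\<in>F2vec g. int (card {f \<in> sign_trivial g (4 * n). transl g x f = f}))"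
    using card_transl_orbits[OF sign_trivial_subset_monomials_on finite_sign_trivial
        transl_in_sign_trivial[of "4 * n"]] by simp
  also have "2 ^ g * \<dots> = (\<Sum>x\<in>F2vec g. \<Sum>u\<in>F2vec g. fixed_sign_sum g (4 * n) x u)"
    by (simp add: sum_distrib_left card_sign_trivial_fixed)
  also have "\<dots> = int (((2 ^ g + 4 * n - 1) choose (4 * n))
      + (2 ^ (2 * g) - 1) * ((2 ^ (g - 1) + 2 * n - 1) choose (2 * n)))"
    using sum_fixed_sign_sum by simp
  finally show ?thesis
    by (simp only: of_nat_eq_iff)
qed

theorem mainTheorem1:
  fixes g n :: nat
  assumes "g \<ge> 1" and "n \<ge> 1"
  shows "real (cdim (Invariants g (4 * n))) =
    (1 / 2 ^ (2 * g)) * (real ((2 ^ g + 4 * n - 1) choose (4 * n))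
      + (2 ^ (2 * g) - 1) * real ((2 ^ (g - 1) + 2 * n - 1) choose (2 * n)))"
proof -
  have "cdim (Invariants g (4 * n)) = card (transl_orbit g ` sign_trivial g (4 * n))"
    by (rule cdim_Invariants) simp
  moreover have "(1::nat) \<le> 2 ^ (2 * g)"
    by simp
  ultimately show ?thesis
    using arg_cong[OF card_transl_orbits_sign_trivial[of g n], of real]
    by (simp add: of_nat_diff field_simps)
qed

end
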